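(* If $\alpha \in \mathbb{R}_{>0}$ is transcendental, then the additive monoid $M_\alpha = \{f(\alpha) \mid f(x) \in \mathbb{N}_0[x,x^{-1}]\}$ is atomic.
   Context: $\mathbb{N}_0[x,x^{-1}]$ denotes the semiring of Laurent polynomials with coefficients in $\mathbb{N}_0$. A (reduced, additive) monoid is atomic if every nonzero element is a sum of atoms, where an atom is a nonzero element that cannot be written as a sum of two nonzero elements. *)

theory Defs
  imports "HOL-Computational_Algebra.Polynomial" Complex_Main
begin

text \<open>An element of N0[x,x^-1] is represented by its coefficient function
  c :: int => nat with finite support.\<close>

definition laurent_eval :: "(int \<Rightarrow> nat) \<Rightarrow> real \<Rightarrow> real" where
  "laurent_eval c a = (\<Sum>i\<in>{i. c i \<noteq> 0}. real (c i) * a powi i)"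

definition M_alpha :: "real \<Rightarrow> real set" where
  "M_alpha a = {laurent_eval c a | c. finite {i. c i \<noteq> 0}}"

definition is_atom :: "real set \<Rightarrow> real \<Rightarrow> bool" where
  "is_atom M x \<longleftrightarrow> x \<in> M \<and> x \<noteq> 0 \<and>
     \<not> (\<exists>y\<in>M. \<exists>z\<in>M. y \<noteq> 0 \<and> z \<noteq> 0 \<and> x = y + z)"

definition atomic_monoid :: "real set \<Rightarrow> bool" where
  "atomic_monoid M \<longleftrightarrow>
     (\<forall>x\<in>M. x \<noteq> 0 \<longrightarrow> (\<exists>as. as \<noteq> [] \<and> (\<forall>a\<in>set as. is_atom M a) \<and> sum_list as = x))"

end

theory Submission
  imports Defs
begin

text \<open>Since \<open>\<alpha>\<close> is transcendental, multiplying by a suitable power of \<open>\<alpha>\<close> turns any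
  integer relation between the powers \<open>\<alpha>\<^sup>i\<close>, \<open>i \<in> \<int>\<close>, into a polynomial one, so a Laurent
  polynomial is determined by its value at \<open>\<alpha>\<close>. Hence \<open>\<alpha>\<^sup>i = f(\<alpha>) + g(\<alpha>)\<close> forces
  \<open>f + g = x\<^sup>i\<close>, and as the coefficients are nonnegative one of \<open>f\<close>, \<open>g\<close> vanishes: every
  \<open>\<alpha>\<^sup>i\<close> is an atom, and every element \<open>f(\<alpha>)\<close> is a sum of such powers.\<close>

lemma sum_list_concat:
  fixes xss :: "'a :: monoid_add list list"
  shows "sum_list (concat xss) = sum_list (map sum_list xss)"
  by (induction xss) auto

lemma transcendental_power_sum_eq_zero:
  fixes x :: "'a :: field_char_0"
  assumes "\<not> algebraic x" "finite T" "(\<Sum>k\<in>T. of_int (g k) * x ^ k) = 0"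
  shows "\<forall>k\<in>T. g k = 0"
proof -
  define p where "p = (\<Sum>k\<in>T. monom (of_int (g k) :: 'a) k)"
  have coeff_p: "coeff p k = (if k \<in> T then of_int (g k) else 0)" for k
    using assms(2) by (simp add: p_def coeff_sum)
  have "poly p x = 0"
    using assms(3) by (simp add: p_def poly_sum poly_monom)
  moreover have "coeff p k \<in> \<int>" for k
    by (simp add: coeff_p)
  ultimately have "p = 0"
    using assms(1) algebraicI by blast
  then show ?thesis
    using coeff_p by (metis coeff_0 of_int_eq_0_iff)
qed

lemma transcendental_laurent_sum_eq_zero:
  fixes x :: "'a :: field_char_0"
  assumes "\<not> algebraic x" "finite S" "(\<Sum>i\<in>S. of_int (e i) * x powi i) = 0"
  shows "\<forall>i\<in>S. e i = 0"
proof -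
  obtain m where "\<And>i. i \<in> S \<Longrightarrow> m \<le> i"
    using bdd_below_finite[OF assms(2)] unfolding bdd_below_def by blast
  then obtain N :: int where N: "\<And>i. i \<in> S \<Longrightarrow> i + N \<ge> 0"
    by (metis diff_ge_0_iff_ge diff_conv_add_uminus)
  define shift where "shift i = nat (i + N)" for i
  have inj: "inj_on shift S"
    using N by (auto simp: inj_on_def shift_def nat_eq_iff2)
  have "x \<noteq> 0"
    using assms(1) by auto
  then have pow_shift: "x ^ shift i = x powi N * x powi i" if "i \<in> S" for i
    using N[OF that] by (simp add: shift_def power_int_add flip: power_int_of_nat)
  define g where "g k = e (int k - N)" for k
  have "(\<Sum>k\<in>shift ` S. of_int (g k) * x ^ k) = (\<Sum>i\<in>S. of_int (e i) * x ^ shift i)"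
    unfolding sum.reindex[OF inj] using N by (auto intro!: sum.cong simp: g_def shift_def)
  also have "\<dots> = x powi N * (\<Sum>i\<in>S. of_int (e i) * x powi i)"
    by (simp add: pow_shift sum_distrib_left algebra_simps)
  finally have "(\<Sum>k\<in>shift ` S. of_int (g k) * x ^ k) = 0"
    using assms(3) by simp
  then have "\<forall>k\<in>shift ` S. g k = 0"
    using transcendental_power_sum_eq_zero assms(1,2) by blast
  then show ?thesis
    using N by (auto simp: g_def shift_def)
qed

lemma add_eq_indicator_imp_zero:
  fixes f g :: "'a \<Rightarrow> nat"
  assumes "(\<lambda>j. f j + g j) = (\<lambda>j. if j = i then 1 else 0)"
  shows "f = (\<lambda>_. 0) \<or> g = (\<lambda>_. 0)"
proof -
  have sum_eq: "f j + g j = (if j = i then 1 else 0)" for j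
    using fun_cong[OF assms, of j] by simp
  consider "f i = 0" | "g i = 0"
    using sum_eq[of i] by (auto simp: add_is_1)
  then show ?thesis
  proof cases
    case 1
    then have "f j = 0" for j
      using sum_eq[of j] by (cases "j = i") auto
    then show ?thesis by auto
  next
    case 2
    then have "g j = 0" for j
      using sum_eq[of j] by (cases "j = i") auto
    then show ?thesis by auto
  qed
qed

lemma laurent_eval_eq_sum:
  assumes "finite S" "{i. c i \<noteq> 0} \<subseteq> S"
  shows "laurent_eval c a = (\<Sum>i\<in>S. real (c i) * a powi i)"
  unfolding laurent_eval_def
  by (rule sum.mono_neutral_left) (use assms in auto)

lemma laurent_eval_add:
  assumes "finite {i. c i \<noteq> 0}" "finite {i. d i \<noteq> 0}"
  shows "laurent_eval (\<lambda>i. c i + d i) a = laurent_eval c a + laurent_eval d a"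
proof -
  let ?S = "{i. c i \<noteq> 0} \<union> {i. d i \<noteq> 0}"
  have "finite ?S"
    using assms by simp
  from laurent_eval_eq_sum[OF this, of c a] laurent_eval_eq_sum[OF this, of d a]
    laurent_eval_eq_sum[OF this, of "\<lambda>i. c i + d i" a]
  show ?thesis
    by (auto simp: sum.distrib algebra_simps)
qed

lemma laurent_eval_zero [simp]: "laurent_eval (\<lambda>_. 0) a = 0"
  by (simp add: laurent_eval_def)

lemma laurent_eval_monom: "laurent_eval (\<lambda>j. if j = i then 1 else 0) a = a powi i"
  by (simp add: laurent_eval_def)

lemma laurent_eval_inj:
  assumes "\<not> algebraic \<alpha>" "finite {i. c i \<noteq> 0}" "finite {i. d i \<noteq> 0}"
    and "laurent_eval c \<alpha> = laurent_eval d \<alpha>"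
  shows "c = d"
proof -
  define S where "S = {i. c i \<noteq> 0} \<union> {i. d i \<noteq> 0}"
  have "finite S"
    using assms(2,3) by (simp add: S_def)
  have "(\<Sum>i\<in>S. of_int (int (c i) - int (d i)) * \<alpha> powi i) =
        laurent_eval c \<alpha> - laurent_eval d \<alpha>"
    using laurent_eval_eq_sum[OF \<open>finite S\<close>, of c] laurent_eval_eq_sum[OF \<open>finite S\<close>, of d]
    by (simp add: S_def sum_subtractf left_diff_distrib)
  also have "\<dots> = 0"
    using assms(4) by simp
  finally have diff: "\<forall>i\<in>S. int (c i) - int (d i) = 0"
    by (rule transcendental_laurent_sum_eq_zero[OF assms(1) \<open>finite S\<close>])
  show ?thesis
  proof
    fix i
    show "c i = d i"
    proof (cases "i \<in> S")
      case True
      then show ?thesis using diff by simp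
    next
      case False
      then show ?thesis by (simp add: S_def)
    qed
  qed
qed

lemma laurent_eval_in_M_alpha:
  "finite {i. c i \<noteq> 0} \<Longrightarrow> laurent_eval c a \<in> M_alpha a"
  by (auto simp: M_alpha_def)

lemma is_atom_powi_M_alpha:
  assumes "\<not> algebraic \<alpha>"
  shows "is_atom (M_alpha \<alpha>) (\<alpha> powi i)"
  unfolding is_atom_def
proof (intro conjI notI)
  define \<delta> where "\<delta> = (\<lambda>j. if j = i then 1 else 0 :: nat)"
  have fin_\<delta>: "finite {j. \<delta> j \<noteq> 0}"
    by (simp add: \<delta>_def)
  show "\<alpha> powi i \<in> M_alpha \<alpha>"
    using laurent_eval_in_M_alpha[OF fin_\<delta>] by (simp add: \<delta>_def laurent_eval_monom)
  show "\<alpha> powi i = 0 \<Longrightarrow> False"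
    using assms by auto
  assume "\<exists>y\<in>M_alpha \<alpha>. \<exists>z\<in>M_alpha \<alpha>. y \<noteq> 0 \<and> z \<noteq> 0 \<and> \<alpha> powi i = y + z"
  then obtain f g where fin: "finite {j. f j \<noteq> 0}" "finite {j. g j \<noteq> 0}"
    and nonzero: "laurent_eval f \<alpha> \<noteq> 0" "laurent_eval g \<alpha> \<noteq> 0"
    and split: "\<alpha> powi i = laurent_eval f \<alpha> + laurent_eval g \<alpha>"
    unfolding M_alpha_def by blast
  have "laurent_eval (\<lambda>j. f j + g j) \<alpha> = laurent_eval \<delta> \<alpha>"
    using split by (simp add: laurent_eval_add[OF fin] \<delta>_def laurent_eval_monom)
  moreover have "finite {j. f j + g j \<noteq> 0}"
    using fin by (simp add: Collect_disj_eq)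
  ultimately have "(\<lambda>j. f j + g j) = \<delta>"
    using laurent_eval_inj[OF assms _ fin_\<delta>, of "\<lambda>j. f j + g j"] by blast
  then have "f = (\<lambda>_. 0) \<or> g = (\<lambda>_. 0)"
    unfolding \<delta>_def by (rule add_eq_indicator_imp_zero)
  then show False
    using nonzero by auto
qed

lemma laurent_eval_eq_sum_list_powers:
  assumes "finite {i. c i \<noteq> 0}"
  obtains as where "\<forall>b\<in>set as. \<exists>i. b = a powi i" "sum_list as = laurent_eval c a"
proof
  let ?as = "concat (map (\<lambda>i. replicate (c i) (a powi i)) (sorted_list_of_set {i. c i \<noteq> 0}))"
  show "\<forall>b\<in>set ?as. \<exists>i. b = a powi i"
    by auto
  show "sum_list ?as = laurent_eval c a"
    using assms by (simp add: laurent_eval_def sum_list_concat comp_def sum_list_replicate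
        sum_list_distinct_conv_sum_set)
qed

theorem corollary3p2:
  fixes \<alpha> :: real
  assumes "\<alpha> > 0" and "\<not> algebraic \<alpha>"
  shows "atomic_monoid (M_alpha \<alpha>)"
  unfolding atomic_monoid_def
proof (intro ballI impI)
  fix x assume "x \<in> M_alpha \<alpha>" "x \<noteq> 0"
  then obtain c where fin: "finite {i. c i \<noteq> 0}" and x: "x = laurent_eval c \<alpha>"
    unfolding M_alpha_def by blast
  obtain as where powers: "\<forall>b\<in>set as. \<exists>i. b = \<alpha> powi i" and "sum_list as = x"
    using laurent_eval_eq_sum_list_powers[OF fin] x by metis
  moreover have "as \<noteq> []"
    using \<open>sum_list as = x\<close> \<open>x \<noteq> 0\<close> by auto
  moreover have "\<forall>b\<in>set as. is_atom (M_alpha \<alpha>) b"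
    using powers is_atom_powi_M_alpha[OF assms(2)] by auto
  ultimately show "\<exists>as. as \<noteq> [] \<and> (\<forall>a\<in>set as. is_atom (M_alpha \<alpha>) a) \<and> sum_list as = x"
    by blast
qed

end
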